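(* Let $\Omega_n=\dfrac{\pi^{n/2}}{\Gamma\left(\frac n2+1\right)}$ for $n\in\mathbb{N}_0$, and \[ p(n)=\frac1{2n}-\frac1{2n^2}+\frac5{12n^3}-\frac1{4n^4}+\frac1{10n^5}-\frac1{6n^6},\qquad q(n)=p(n)+\frac1{6n^6}. \] Then for every $n\in\mathbb{N}$, \[ p(n)<\ln\frac{\Omega_n^2}{\Omega_{n-1}\Omega_{n+1}}<q(n). \]
   Context: $\Omega_n$ is the volume of the unit ball in $\mathbb{R}^n$ ($\Omega_0=1$); $\Gamma$ is Euler's gamma function. *)

theory Defs
  imports "HOL-Analysis.Analysis"
begin

definition Omega :: "nat \<Rightarrow> real" where
  "Omega n = pi powr (real n / 2) / Gamma (real n / 2 + 1)"

definition p14 :: "nat \<Rightarrow> real" where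
  "p14 n = 1 / (2 * real n) - 1 / (2 * real n ^ 2) + 5 / (12 * real n ^ 3)
           - 1 / (4 * real n ^ 4) + 1 / (10 * real n ^ 5) - 1 / (6 * real n ^ 6)"

definition q14 :: "nat \<Rightarrow> real" where
  "q14 n = p14 n + 1 / (6 * real n ^ 6)"

end

theory Submission
  imports Defs "HOL-Real_Asymp.Real_Asymp"
begin

text \<open>
  Put \<open>g(t) = ln (\<Gamma>((t+1)/2) \<Gamma>((t+3)/2) / \<Gamma>(t/2+1)\<^sup>2)\<close>, so that the quantity of the
  theorem is \<open>g(n)\<close>. The functional equation of \<open>\<Gamma>\<close> gives
  \<open>g(t) - g(t+2) = L(t) = ln ((t+2)\<^sup>2 / ((t+1)(t+3)))\<close>, and log-convexity of \<open>\<Gamma>\<close> gives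
  \<open>0 \<le> g(t) \<le> ln (1 + 1/t)\<close>, hence \<open>g(t) \<rightarrow> 0\<close>. For a candidate bound \<open>P\<close> that also tends
  to \<open>0\<close>, the difference \<open>g - P\<close> telescopes:
  \<open>g(t) - P(t) = \<Sum>\<^sub>k (L - P + P(\<cdot>+2))(t+2k)\<close>. So it suffices that the one-step defect
  \<open>L(t) - P(t) + P(t+2)\<close> has constant sign; as it tends to \<open>0\<close>, this follows from the sign of
  its derivative, a rational function whose numerator for the two bounds \<open>p\<close> and \<open>q\<close> is a
  polynomial with coefficients of one sign.
\<close>

lemma pos_if_tendsto_zero_and_decreasing_steps:
  fixes f :: "real \<Rightarrow> real"
  assumes lim: "(f \<longlongrightarrow> 0) at_top" and "d > 0"
    and step: "\<And>s. s \<ge> t \<Longrightarrow> f (s + d) < f s"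
  shows "0 < f t"
proof -
  define a where "a k = f (t + real k * d)" for k
  have a_Suc: "a (Suc k) < a k" for k
    using step[of "t + real k * d"] \<open>d > 0\<close> by (simp add: a_def algebra_simps)
  then have "decseq a"
    by (intro decseq_SucI less_imp_le)
  moreover have "a \<longlonglongrightarrow> 0"
  proof -
    have "filterlim (\<lambda>k::nat. t + real k * d) at_top sequentially"
      using \<open>d > 0\<close> by real_asymp
    then show ?thesis
      unfolding a_def by (rule filterlim_compose[OF lim])
  qed
  ultimately have "0 \<le> a 1"
    by (rule decseq_ge)
  with a_Suc[of 0] show ?thesis
    by (simp add: a_def)
qed

lemma ln_Gamma_real_plus1:
  assumes "(x::real) > 0"
  shows "ln (Gamma (x + 1)) = ln x + ln (Gamma x)"
proof -
  have "Gamma (x + 1) = x * Gamma x"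
    using assms by (intro Gamma_plus1) auto
  then show ?thesis
    using assms Gamma_real_pos[OF assms] by (simp add: ln_mult_pos)
qed

lemma ln_Gamma_midpoint_le:
  assumes "(a::real) > 0" "b > 0"
  shows "2 * ln (Gamma ((a + b) / 2)) \<le> ln (Gamma a) + ln (Gamma b)"
proof -
  have "(ln \<circ> Gamma) ((1 - 1/2) *\<^sub>R a + (1/2) *\<^sub>R b) \<le> (1 - 1/2) * (ln \<circ> Gamma) a + (1/2) * (ln \<circ> Gamma) b"
    by (rule convex_onD[OF log_convex_Gamma_real]) (use assms in auto)
  moreover have "(1 - 1/2) *\<^sub>R a + (1/2) *\<^sub>R b = (a + b) / 2"
    by simp
  ultimately show ?thesis
    by (simp add: add_divide_distrib)
qed

definition Gamma_log_ratio :: "real \<Rightarrow> real" where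
  "Gamma_log_ratio t = ln (Gamma ((t + 1) / 2)) + ln (Gamma ((t + 3) / 2)) - 2 * ln (Gamma (t / 2 + 1))"

definition log_step :: "real \<Rightarrow> real" where
  "log_step t = 2 * ln (t + 2) - ln (t + 1) - ln (t + 3)"

lemma Gamma_log_ratio_shift:
  assumes "t > 0"
  shows "Gamma_log_ratio (t + 2) = Gamma_log_ratio t - log_step t"
proof -
  have "ln (Gamma ((t + 2 + 1) / 2)) = ln ((t + 1) / 2) + ln (Gamma ((t + 1) / 2))"
    using ln_Gamma_real_plus1[of "(t + 1) / 2"] assms by (simp add: add_divide_distrib)
  moreover have "ln (Gamma ((t + 2 + 3) / 2)) = ln ((t + 3) / 2) + ln (Gamma ((t + 3) / 2))"
    using ln_Gamma_real_plus1[of "(t + 3) / 2"] assms by (simp add: add_divide_distrib)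
  moreover have "ln (Gamma ((t + 2) / 2 + 1)) = ln ((t + 2) / 2) + ln (Gamma (t / 2 + 1))"
    using ln_Gamma_real_plus1[of "t / 2 + 1"] assms by (simp add: add_divide_distrib)
  ultimately show ?thesis
    using assms by (simp add: Gamma_log_ratio_def log_step_def ln_div)
qed

lemma Gamma_log_ratio_bounds:
  assumes "t > 0"
  shows "0 \<le> Gamma_log_ratio t" "Gamma_log_ratio t \<le> ln (t + 1) - ln t"
proof -
  have "2 * ln (Gamma (t / 2 + 1)) \<le> ln (Gamma ((t + 1) / 2)) + ln (Gamma ((t + 3) / 2))"
    using ln_Gamma_midpoint_le[of "(t + 1) / 2" "(t + 3) / 2"] assms by (simp add: add_divide_distrib)
  then show "0 \<le> Gamma_log_ratio t"
    by (simp add: Gamma_log_ratio_def)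
  have "2 * ln (Gamma ((t + 1) / 2)) \<le> ln (Gamma (t / 2)) + ln (Gamma (t / 2 + 1))"
    using ln_Gamma_midpoint_le[of "t / 2" "t / 2 + 1"] assms by (simp add: add_divide_distrib)
  moreover have "ln (Gamma ((t + 3) / 2)) = ln (Gamma ((t + 1) / 2 + 1))"
    by (simp add: field_simps)
  moreover have "\<dots> = ln ((t + 1) / 2) + ln (Gamma ((t + 1) / 2))"
    using assms by (intro ln_Gamma_real_plus1) simp
  moreover have "ln (Gamma (t / 2 + 1)) = ln (t / 2) + ln (Gamma (t / 2))"
    using ln_Gamma_real_plus1[of "t / 2"] assms by simp
  ultimately show "Gamma_log_ratio t \<le> ln (t + 1) - ln t"
    using assms by (simp add: Gamma_log_ratio_def ln_div)
qed

lemma Gamma_log_ratio_tendsto_zero: "(Gamma_log_ratio \<longlongrightarrow> 0) at_top"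
proof (rule tendsto_sandwich)
  show "\<forall>\<^sub>F t in at_top. 0 \<le> Gamma_log_ratio t"
    using eventually_gt_at_top[of 0] by eventually_elim (rule Gamma_log_ratio_bounds)
  show "\<forall>\<^sub>F t in at_top. Gamma_log_ratio t \<le> ln (t + 1) - ln t"
    using eventually_gt_at_top[of 0] by eventually_elim (rule Gamma_log_ratio_bounds)
  show "((\<lambda>t::real. ln (t + 1) - ln t) \<longlongrightarrow> 0) at_top"
    by real_asymp
qed simp

lemma ln_Omega_ratio:
  assumes "n \<ge> 1"
  shows "ln (Omega n ^ 2 / (Omega (n - 1) * Omega (n + 1))) = Gamma_log_ratio (real n)"
proof -
  define t where "t = real n"
  have "t > 0"
    using assms by (simp add: t_def)
  have Omega_n: "Omega n = pi powr (t / 2) / Gamma (t / 2 + 1)"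
    by (simp add: Omega_def t_def)
  have Omega_pred: "Omega (n - 1) = pi powr ((t - 1) / 2) / Gamma ((t + 1) / 2)"
  proof -
    have "real (n - 1) = t - 1"
      using assms by (simp add: t_def of_nat_diff)
    then have "real (n - 1) / 2 = (t - 1) / 2"
      by simp
    moreover have "(t - 1) / 2 + 1 = (t + 1) / 2"
      by (simp add: field_simps)
    ultimately show ?thesis
      unfolding Omega_def by (simp only:)
  qed
  have Omega_Suc: "Omega (n + 1) = pi powr ((t + 1) / 2) / Gamma ((t + 3) / 2)"
  proof -
    have "real (n + 1) / 2 = (t + 1) / 2" "(t + 1) / 2 + 1 = (t + 3) / 2"
      by (simp_all add: t_def field_simps)
    then show ?thesis
      unfolding Omega_def by (simp only:)
  qed
  have "(t - 1) / 2 + (t + 1) / 2 = t / 2 + t / 2"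
    by (simp add: field_simps)
  then have "pi powr ((t - 1) / 2) * pi powr ((t + 1) / 2) = (pi powr (t / 2))\<^sup>2"
    by (simp only: powr_add[symmetric] power2_eq_square)
  then have "Omega n ^ 2 / (Omega (n - 1) * Omega (n + 1))
      = Gamma ((t + 1) / 2) * Gamma ((t + 3) / 2) / Gamma (t / 2 + 1) ^ 2"
    unfolding Omega_n Omega_pred Omega_Suc using \<open>t > 0\<close> by (simp add: field_simps)
  also have "ln \<dots> = Gamma_log_ratio t"
  proof -
    have "Gamma ((t + 1) / 2) > 0" "Gamma ((t + 3) / 2) > 0" "Gamma (t / 2 + 1) > 0"
      using \<open>t > 0\<close> by simp_all
    then show ?thesis
      by (simp add: Gamma_log_ratio_def ln_mult ln_div ln_realpow)
  qed
  finally show ?thesis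
    by (simp add: t_def)
qed

text \<open>\<open>ratio_approx (1/6)\<close> is \<open>p\<close> and \<open>ratio_approx 0\<close> is \<open>q\<close>.\<close>

definition ratio_approx :: "real \<Rightarrow> real \<Rightarrow> real" where
  "ratio_approx c t = 1 / (2 * t) - 1 / (2 * t ^ 2) + 5 / (12 * t ^ 3) - 1 / (4 * t ^ 4)
     + 1 / (10 * t ^ 5) - c / t ^ 6"

definition step_defect :: "real \<Rightarrow> real \<Rightarrow> real" where
  "step_defect c t = log_step t - ratio_approx c t + ratio_approx c (t + 2)"

definition ratio_approx_slope :: "real \<Rightarrow> real \<Rightarrow> real" where
  "ratio_approx_slope c t = 10 * t ^ 5 - 20 * t ^ 4 + 25 * t ^ 3 - 20 * t ^ 2 + 10 * t - 120 * c"

definition step_defect_numerator :: "real \<Rightarrow> real \<Rightarrow> real" where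
  "step_defect_numerator c t =
     (t + 1) * (t + 3) * ((t + 2) ^ 7 * ratio_approx_slope c t - t ^ 7 * ratio_approx_slope c (t + 2))
     - 40 * t ^ 7 * (t + 2) ^ 6"

lemma ratio_approx_deriv:
  assumes "t \<noteq> 0"
  shows "(ratio_approx c has_real_derivative - ratio_approx_slope c t / (20 * t ^ 7)) (at t)"
  unfolding ratio_approx_def[abs_def] ratio_approx_slope_def
  by (rule derivative_eq_intros refl | simp add: assms)+ (use assms in \<open>simp add: divide_simps\<close>, algebra)

lemma log_step_deriv:
  assumes "t > 0"
  shows "(log_step has_real_derivative - 2 / ((t + 1) * (t + 2) * (t + 3))) (at t)"
proof -
  have ln_shift: "((\<lambda>s. ln (s + k)) has_real_derivative 1 / (t + k)) (at t)" if "k > 0" for k :: real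
    using DERIV_shift[of ln "1 / (t + k)" t k] DERIV_ln_divide[of "t + k"] that assms by simp
  have "(log_step has_real_derivative 2 * (1 / (t + 2)) - 1 / (t + 1) - 1 / (t + 3)) (at t)"
    unfolding log_step_def[abs_def] by (intro DERIV_diff DERIV_cmult ln_shift) auto
  moreover have "t + 1 \<noteq> 0" "t + 2 \<noteq> 0" "t + 3 \<noteq> 0"
    using assms by auto
  then have "2 * (1 / (t + 2)) - 1 / (t + 1) - 1 / (t + 3) = - 2 / ((t + 1) * (t + 2) * (t + 3))"
    by (simp add: divide_simps) algebra
  ultimately show ?thesis
    by simp
qed

lemma step_defect_deriv:
  assumes "t > 0"
  shows "(step_defect c has_real_derivative
           step_defect_numerator c t / (20 * t ^ 7 * (t + 1) * (t + 2) ^ 7 * (t + 3))) (at t)"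
proof -
  have shifted: "((\<lambda>s. ratio_approx c (s + 2)) has_real_derivative
                   - ratio_approx_slope c (t + 2) / (20 * (t + 2) ^ 7)) (at t)"
    using DERIV_shift[of "ratio_approx c" _ t 2] ratio_approx_deriv[of "t + 2" c] assms by simp
  have deriv: "(step_defect c has_real_derivative
          - 2 / ((t + 1) * (t + 2) * (t + 3)) + ratio_approx_slope c t / (20 * t ^ 7)
          - ratio_approx_slope c (t + 2) / (20 * (t + 2) ^ 7)) (at t)"
    unfolding step_defect_def[abs_def]
    using DERIV_add[OF DERIV_diff[OF log_step_deriv ratio_approx_deriv] shifted] assms by simp
  have "t \<noteq> 0" "t + 1 \<noteq> 0" "t + 2 \<noteq> 0" "t + 3 \<noteq> 0"
    using assms by auto
  then have "- 2 / ((t + 1) * (t + 2) * (t + 3)) + ratio_approx_slope c t / (20 * t ^ 7)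
          - ratio_approx_slope c (t + 2) / (20 * (t + 2) ^ 7)
      = step_defect_numerator c t / (20 * t ^ 7 * (t + 1) * (t + 2) ^ 7 * (t + 3))"
    by (simp add: divide_simps step_defect_numerator_def) algebra
  with deriv show ?thesis
    by simp
qed

lemma step_defect_numerator_one_sixth_neg:
  assumes "t > 0"
  shows "step_defect_numerator (1/6) t < 0"
proof -
  have "0 < 7680 + 33280 * t + 67840 * t ^ 2 + 84480 * t ^ 3 + 66880 * t ^ 4 + 32320 * t ^ 5
      + 8640 * t ^ 6 + 1000 * t ^ 7" (is "0 < ?P")
    using assms by (intro add_pos_pos) auto
  moreover have "step_defect_numerator (1/6) t = - ?P"
    unfolding step_defect_numerator_def ratio_approx_slope_def by algebra
  ultimately show ?thesis
    by simp
qed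

lemma step_defect_numerator_zero_pos:
  assumes "t > 0"
  shows "0 < step_defect_numerator 0 t"
proof -
  have "step_defect_numerator 0 t = 3840 * t + 10880 * t ^ 2 + 11840 * t ^ 3 + 8160 * t ^ 4
      + 6320 * t ^ 5 + 4520 * t ^ 6 + 1800 * t ^ 7 + 280 * t ^ 8"
    unfolding step_defect_numerator_def ratio_approx_slope_def by algebra
  also have "\<dots> > 0"
    using assms by (intro add_pos_pos) auto
  finally show ?thesis .
qed

lemma step_defect_tendsto_zero: "(step_defect c \<longlongrightarrow> 0) at_top"
  unfolding step_defect_def[abs_def] log_step_def ratio_approx_def by real_asymp

lemma step_defect_one_sixth_pos:
  assumes "t > 0"
  shows "0 < step_defect (1/6) t"
proof (rule DERIV_neg_imp_decreasing_at_top[OF _ step_defect_tendsto_zero])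
  fix x assume "x \<ge> t"
  with assms have "x > 0"
    by simp
  then have "step_defect_numerator (1/6) x < 0"
    by (rule step_defect_numerator_one_sixth_neg)
  moreover have "0 < 20 * x ^ 7 * (x + 1) * (x + 2) ^ 7 * (x + 3)"
    using \<open>x > 0\<close> by simp
  ultimately show "\<exists>y. (step_defect (1/6) has_real_derivative y) (at x) \<and> y < 0"
    using step_defect_deriv[OF \<open>x > 0\<close>] divide_neg_pos by blast
qed

lemma step_defect_zero_neg:
  assumes "t > 0"
  shows "step_defect 0 t < 0"
proof -
  have "0 < - step_defect 0 t"
  proof (rule DERIV_neg_imp_decreasing_at_top[where f = "\<lambda>s. - step_defect 0 s"])
    show "((\<lambda>s. - step_defect 0 s) \<longlongrightarrow> 0) at_top"
      using tendsto_minus[OF step_defect_tendsto_zero[of 0]] by simp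
    fix x assume "x \<ge> t"
    with assms have "x > 0"
      by simp
    then have "0 < step_defect_numerator 0 x"
      by (rule step_defect_numerator_zero_pos)
    moreover have "0 < 20 * x ^ 7 * (x + 1) * (x + 2) ^ 7 * (x + 3)"
      using \<open>x > 0\<close> by simp
    ultimately show "\<exists>y. ((\<lambda>s. - step_defect 0 s) has_real_derivative y) (at x) \<and> y < 0"
      using DERIV_minus[OF step_defect_deriv[OF \<open>x > 0\<close>]] by (intro exI conjI) auto
  qed
  then show ?thesis
    by simp
qed

lemma Gamma_log_ratio_minus_approx_step:
  assumes "s > 0"
  shows "Gamma_log_ratio (s + 2) - ratio_approx c (s + 2)
           = Gamma_log_ratio s - ratio_approx c s - step_defect c s"
  using Gamma_log_ratio_shift[OF assms] by (simp add: step_defect_def)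

lemma Gamma_log_ratio_minus_approx_tendsto_zero:
  "((\<lambda>t. Gamma_log_ratio t - ratio_approx c t) \<longlongrightarrow> 0) at_top"
proof -
  have "(ratio_approx c \<longlongrightarrow> 0) at_top"
    unfolding ratio_approx_def[abs_def] by real_asymp
  then show ?thesis
    using tendsto_diff[OF Gamma_log_ratio_tendsto_zero] by fastforce
qed

lemma ratio_approx_less_Gamma_log_ratio:
  assumes "t > 0" and defect_pos: "\<And>s. s > 0 \<Longrightarrow> 0 < step_defect c s"
  shows "ratio_approx c t < Gamma_log_ratio t"
proof -
  have "0 < Gamma_log_ratio t - ratio_approx c t"
  proof (rule pos_if_tendsto_zero_and_decreasing_steps[where f = "\<lambda>t. Gamma_log_ratio t - ratio_approx c t"])
    show "((\<lambda>t. Gamma_log_ratio t - ratio_approx c t) \<longlongrightarrow> 0) at_top"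
      by (rule Gamma_log_ratio_minus_approx_tendsto_zero)
    fix s assume "s \<ge> t"
    with assms have "s > 0"
      by simp
    then show "Gamma_log_ratio (s + 2) - ratio_approx c (s + 2) < Gamma_log_ratio s - ratio_approx c s"
      using Gamma_log_ratio_minus_approx_step[of s c] defect_pos[of s] by linarith
  qed simp
  then show ?thesis
    by simp
qed

lemma Gamma_log_ratio_less_ratio_approx:
  assumes "t > 0" and defect_neg: "\<And>s. s > 0 \<Longrightarrow> step_defect c s < 0"
  shows "Gamma_log_ratio t < ratio_approx c t"
proof -
  have "0 < ratio_approx c t - Gamma_log_ratio t"
  proof (rule pos_if_tendsto_zero_and_decreasing_steps[where f = "\<lambda>t. ratio_approx c t - Gamma_log_ratio t"])
    show "((\<lambda>t. ratio_approx c t - Gamma_log_ratio t) \<longlongrightarrow> 0) at_top"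
      using tendsto_minus[OF Gamma_log_ratio_minus_approx_tendsto_zero[of c]] by simp
    fix s assume "s \<ge> t"
    with assms have "s > 0"
      by simp
    then show "ratio_approx c (s + 2) - Gamma_log_ratio (s + 2) < ratio_approx c s - Gamma_log_ratio s"
      using Gamma_log_ratio_minus_approx_step[of s c] defect_neg[of s] by linarith
  qed simp
  then show ?thesis
    by simp
qed

theorem theorem14:
  fixes n :: nat
  assumes "n \<ge> 1"
  shows "p14 n < ln (Omega n ^ 2 / (Omega (n - 1) * Omega (n + 1)))
       \<and> ln (Omega n ^ 2 / (Omega (n - 1) * Omega (n + 1))) < q14 n"
proof -
  have "real n > 0"
    using assms by simp
  moreover have "p14 n = ratio_approx (1/6) (real n)" "q14 n = ratio_approx 0 (real n)"
    by (simp_all add: p14_def q14_def ratio_approx_def)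
  ultimately show ?thesis
    unfolding ln_Omega_ratio[OF assms]
    using ratio_approx_less_Gamma_log_ratio[OF _ step_defect_one_sixth_pos]
      Gamma_log_ratio_less_ratio_approx[OF _ step_defect_zero_neg] by simp
qed

end
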